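(* Consider the system \[ x_{k+1} = x_k - \rho y_k + \hat g(y_k,w_k),\qquad y_{k+1} = (1-\beta)y_k + \hat h(y_{k-1},w_{k-1})\bigl(J(x_k)-J(x_{k-1})\bigr) \] with the setup described in the context. Then for any function $\bar f:\mathbb{R}^3\to\mathbb{R}$ and any $k\ge1$, \[ \mathbb{E}\Bigl[\frac{\mu h_{k-1}\bar f(x_{k-1},y_{k-1},y_k)}{|y_{k-1}|+\varepsilon}\Delta_{k-1}\Bigr] =\mu\gamma\,\mathbb{E}\bigl[\bar f(x_{k-1},y_{k-1},y_k)\,(\tilde x_{k-1}-\rho y_{k-1})\bigr]. \]
   Context: Setup. Parameters: $\rho>0$, $\beta\in(0,2)$, $\varepsilon>0$, $\omega>0$. The random variables $w_i$, $i\in\mathbb{N}\cup\{0\}$, are i.i.d., each taking the value $-\omega$ or $\omega$ with probability $1/2$. The functions $h,g:\mathbb{R}\to\mathbb{R}$ are odd, satisfy $\mathrm{sign}(g(w))=\mathrm{sign}(h(w))$ for all $w$, and $g(w)=h(w)=0$ if and only if $w=0$. Define $\hat h(y,w):=\frac{h(w)}{|y|+\varepsilon}$ and $\hat g(y,w):=(|y|+\varepsilon)g(w)$. The objective is $J(x)=J^*+\frac{\mu}{2}(x-x^* )^2$ with $\mu>0$, $x^*,J^*\in\mathbb{R}$. The initial data $x_0,y_0$ and the initialization $y_1$ (the $y$-update being applied for $k\ge1$) are deterministic. Notation: $h_k:=h(w_k)$, $g_k:=g(w_k)$, $\tilde x_k:=x_k-x^*$, $\gamma:=\mathbb{E}[h_kg_k]$,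 and \[ \Delta_{k-1}:=(\tilde x_{k-1}-\rho y_{k-1})(|y_{k-1}|+\varepsilon)g_{k-1}-\rho\tilde x_{k-1}y_{k-1}+\tfrac{\rho^2}{2}y_{k-1}^2+\tfrac{g_{k-1}^2}{2}(|y_{k-1}|+\varepsilon)^2, \] so that $J(x_k)=J(x_{k-1})+\mu\Delta_{k-1}$. *)

theory Defs
  imports "HOL-Probability.Probability"
begin

definition Jobj :: "real \<Rightarrow> real \<Rightarrow> real \<Rightarrow> real \<Rightarrow> real" where
  "Jobj Jstar mu xstar x = Jstar + mu / 2 * (x - xstar)^2"

definition hhat :: "(real \<Rightarrow> real) \<Rightarrow> real \<Rightarrow> real \<Rightarrow> real \<Rightarrow> real" where
  "hhat h eps y w = h w / (\<bar>y\<bar> + eps)"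

definition ghat :: "(real \<Rightarrow> real) \<Rightarrow> real \<Rightarrow> real \<Rightarrow> real \<Rightarrow> real" where
  "ghat g eps y w = (\<bar>y\<bar> + eps) * g w"

fun traj :: "real \<Rightarrow> real \<Rightarrow> real \<Rightarrow> real \<Rightarrow> (real \<Rightarrow> real) \<Rightarrow> (real \<Rightarrow> real)
    \<Rightarrow> (real \<Rightarrow> real) \<Rightarrow> real \<Rightarrow> real \<Rightarrow> real \<Rightarrow> (nat \<Rightarrow> real) \<Rightarrow> nat \<Rightarrow> real \<times> real" where
  "traj rho beta eps mu J h g x0 y0 y1 ws 0 = (x0, y0)"
| "traj rho beta eps mu J h g x0 y0 y1 ws (Suc 0) =
     (x0 - rho * y0 + ghat g eps y0 (ws 0), y1)"
| "traj rho beta eps mu J h g x0 y0 y1 ws (Suc (Suc k)) =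
     (let (xk, yk) = traj rho beta eps mu J h g x0 y0 y1 ws k;
          (xk1, yk1) = traj rho beta eps mu J h g x0 y0 y1 ws (Suc k)
      in (xk1 - rho * yk1 + ghat g eps yk1 (ws (Suc k)),
          (1 - beta) * yk1 + hhat h eps yk (ws k) * (J xk1 - J xk)))"

definition Delta :: "real \<Rightarrow> real \<Rightarrow> (real \<Rightarrow> real) \<Rightarrow> real \<Rightarrow> real \<Rightarrow> real \<Rightarrow> real \<Rightarrow> real" where
  "Delta rho eps g xstar x y w =
     (x - xstar - rho * y) * (\<bar>y\<bar> + eps) * g w - rho * (x - xstar) * y
     + rho^2 / 2 * y^2 + (g w)^2 / 2 * (\<bar>y\<bar> + eps)^2"

end

theory Submission
  imports Defs
begin

(* The iterates x_(k-1), y_(k-1) and y_k are functions of the noise history w_0, ..., w_(k-2)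
   alone, and Delta_(k-1) is quadratic in g(w_(k-1)) with coefficients depending on that history.
   Hence h(w_(k-1)) Delta_(k-1) / (|y_(k-1)| + eps) is a sum of h g(w_(k-1)), h(w_(k-1)) and
   h g^2(w_(k-1)), each multiplied by a function of the history. Independence factorises the three
   expectations, and the last two vanish because h and h g^2 are odd and w_(k-1) is symmetric. *)

lemma traj_cong:
  assumes "\<And>i. i < n \<Longrightarrow> ws i = ws' i"
  shows "traj rho beta eps mu J h g x0 y0 y1 ws n = traj rho beta eps mu J h g x0 y0 y1 ws' n"
  using assms by (induction n rule: induct_nat_012) simp_all

lemma snd_traj_Suc_cong:
  assumes "\<And>i. i < n \<Longrightarrow> ws i = ws' i"
  shows "snd (traj rho beta eps mu J h g x0 y0 y1 ws (Suc n))
       = snd (traj rho beta eps mu J h g x0 y0 y1 ws' (Suc n))"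
proof (cases n)
  case (Suc m)
  then show ?thesis
    using assms traj_cong[of m ws ws'] traj_cong[of "Suc m" ws ws'] by (simp split: prod.splits)
qed simp

lemma hhat_mult_Delta:
  assumes "eps > 0"
  shows "hhat h eps y v * Delta rho eps g xstar x y v
     = h v * g v * (x - xstar - rho * y)
       + h v * ((rho^2 / 2 * y^2 - rho * (x - xstar) * y) / (\<bar>y\<bar> + eps))
       + h v * (g v)^2 * ((\<bar>y\<bar> + eps) / 2)"
proof -
  have "\<bar>y\<bar> + eps \<noteq> 0"
    using assms abs_ge_zero[of y] by linarith
  then show ?thesis
    unfolding hhat_def Delta_def by (simp add: field_simps power2_eq_square)
qed

lemma sum_PiE_insert:
  assumes "n \<notin> I"
  shows "(\<Sum>c\<in>PiE (insert n I) B. H c) = (\<Sum>a\<in>B n. \<Sum>c\<in>PiE I B. H (c(n := a)))"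
  unfolding PiE_insert_eq sum.cartesian_product
  by (subst sum.reindex) (use inj_combinator[OF assms] in \<open>auto simp: case_prod_beta\<close>)

context prob_space
begin

(* No measurability of F is needed: V takes finitely many values, so F \<circ> V is a simple function. *)
lemma
  fixes F :: "'b \<Rightarrow> real"
  assumes range: "\<And>s. s \<in> space M \<Longrightarrow> V s \<in> R" and "finite R"
    and events: "\<And>c. c \<in> R \<Longrightarrow> {s \<in> space M. V s = c} \<in> events"
  shows integrable_finite_range: "integrable M (\<lambda>s. F (V s))"
    and expectation_finite_range:
      "expectation (\<lambda>s. F (V s)) = (\<Sum>c\<in>R. F c * prob {s \<in> space M. V s = c})"
proof -
  have image: "V ` space M \<subseteq> R"
    using range by blast
  have "V -` {c} \<inter> space M = {s \<in> space M. V s = c}" for c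
    by auto
  then have V: "simple_function M V"
    unfolding simple_function_def using image events \<open>finite R\<close> finite_subset by auto
  have "Bochner_Integration.simple_bochner_integrable M (\<lambda>s. F (V s))"
    using simple_function_compose[OF V, of F]
    by (intro Bochner_Integration.simple_bochner_integrable.intros) (auto simp: o_def)
  then have integral: "has_bochner_integral M (\<lambda>s. F (V s))
      (\<Sum>c\<in>V ` space M. prob {s \<in> space M. V s = c} * F c)"
    using has_bochner_integral_simple_bochner_integrable simple_bochner_integral_partition[OF _ V]
    by fastforce
  have "prob {s \<in> space M. V s = c} = 0" if "c \<notin> V ` space M" for c
    using that by (metis (mono_tags, lifting) empty_Collect_eq imageI measure_empty)
  then have "(\<Sum>c\<in>V ` space M. prob {s \<in> space M. V s = c} * F c)
      = (\<Sum>c\<in>R. F c * prob {s \<in> space M. V s = c})"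
    using image \<open>finite R\<close> by (intro sum.mono_neutral_cong_left) auto
  with integral have
    "has_bochner_integral M (\<lambda>s. F (V s)) (\<Sum>c\<in>R. F c * prob {s \<in> space M. V s = c})"
    by simp
  then show "integrable M (\<lambda>s. F (V s))"
    and "expectation (\<lambda>s. F (V s)) = (\<Sum>c\<in>R. F c * prob {s \<in> space M. V s = c})"
    by (simp_all add: integrable.intros has_bochner_integral_integral_eq)
qed

lemma prob_restrict_eq_prod:
  fixes w :: "'i \<Rightarrow> 'a \<Rightarrow> real"
  assumes indep: "indep_vars (\<lambda>_. borel) w J" and "I \<subseteq> J" "finite I" "c \<in> extensional I"
  shows "prob {s \<in> space M. restrict (\<lambda>i. w i s) I = c}
       = (\<Prod>i\<in>I. prob {s \<in> space M. w i s = c i})"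
proof (cases "I = {}")
  case True
  then show ?thesis
    using \<open>c \<in> extensional I\<close> by (simp add: restrict_def prob_space)
next
  case False
  have "{s \<in> space M. restrict (\<lambda>i. w i s) I = c} = (\<Inter>i\<in>I. w i -` {c i} \<inter> space M)"
    using False \<open>c \<in> extensional I\<close> by (auto simp: fun_eq_iff extensional_def)
  moreover have "w i -` {c i} \<inter> space M = {s \<in> space M. w i s = c i}" for i
    by auto
  ultimately show ?thesis
    using indep_varsD[OF indep False \<open>finite I\<close> \<open>I \<subseteq> J\<close>, of "\<lambda>i. {c i}"] by simp
qed

lemma
  fixes w :: "'i \<Rightarrow> 'a \<Rightarrow> real" and F :: "('i \<Rightarrow> real) \<Rightarrow> real"
  assumes indep: "indep_vars (\<lambda>_. borel) w J" and "I \<subseteq> J" "finite I" "finite S"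
    and range: "\<And>i s. i \<in> I \<Longrightarrow> s \<in> space M \<Longrightarrow> w i s \<in> S"
  shows integrable_restrict_finite_range: "integrable M (\<lambda>s. F (restrict (\<lambda>i. w i s) I))"
    and expectation_restrict_finite_range: "expectation (\<lambda>s. F (restrict (\<lambda>i. w i s) I))
      = (\<Sum>c\<in>PiE I (\<lambda>_. S). F c * (\<Prod>i\<in>I. prob {s \<in> space M. w i s = c i}))"
proof -
  have [measurable]: "w i \<in> borel_measurable M" if "i \<in> I" for i
    using indep \<open>I \<subseteq> J\<close> that by (auto simp: indep_vars_def)
  have "{s \<in> space M. restrict (\<lambda>i. w i s) I = c} = {s \<in> space M. \<forall>i\<in>I. w i s = c i}"
    if "c \<in> extensional I" for c
    using that by (auto simp: fun_eq_iff extensional_def)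
  then have events: "{s \<in> space M. restrict (\<lambda>i. w i s) I = c} \<in> events"
    if "c \<in> PiE I (\<lambda>_. S)" for c
    using that \<open>finite I\<close> by (simp add: PiE_def) measurable
  show "integrable M (\<lambda>s. F (restrict (\<lambda>i. w i s) I))"
    using range events \<open>finite I\<close> \<open>finite S\<close>
    by (intro integrable_finite_range[where V = "\<lambda>s. restrict (\<lambda>i. w i s) I"
          and R = "PiE I (\<lambda>_. S)"]) (auto simp: finite_PiE)
  show "expectation (\<lambda>s. F (restrict (\<lambda>i. w i s) I))
      = (\<Sum>c\<in>PiE I (\<lambda>_. S). F c * (\<Prod>i\<in>I. prob {s \<in> space M. w i s = c i}))"
    using range events \<open>finite I\<close> \<open>finite S\<close>
    by (subst expectation_finite_range[where V = "\<lambda>s. restrict (\<lambda>i. w i s) I"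
          and R = "PiE I (\<lambda>_. S)"])
      (auto simp: finite_PiE PiE_iff intro!: sum.cong prob_restrict_eq_prod[OF indep \<open>I \<subseteq> J\<close>])
qed

lemma expectation_odd_symmetric:
  fixes X :: "'a \<Rightarrow> real" and \<phi> :: "real \<Rightarrow> real"
  assumes "X \<in> borel_measurable M" and range: "\<And>s. s \<in> space M \<Longrightarrow> X s = - a \<or> X s = a"
    and sym: "prob {s \<in> space M. X s = a} = prob {s \<in> space M. X s = - a}"
    and odd: "\<And>v. \<phi> (- v) = - \<phi> v"
  shows "expectation (\<lambda>s. \<phi> (X s)) = 0"
proof -
  have "expectation (\<lambda>s. \<phi> (X s)) = (\<Sum>c\<in>{- a, a}. \<phi> c * prob {s \<in> space M. X s = c})"
    using range assms(1) by (intro expectation_finite_range) auto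
  moreover have "\<phi> 0 = 0"
    using odd[of 0] by simp
  ultimately show ?thesis
    using sym odd[of a] by (cases "a = 0") auto
qed

lemma
  fixes w :: "'i \<Rightarrow> 'a \<Rightarrow> real" and \<phi> :: "real \<Rightarrow> real" and G :: "('i \<Rightarrow> real) \<Rightarrow> real"
  assumes indep: "indep_vars (\<lambda>_. borel) w J" and "insert n I \<subseteq> J" "n \<notin> I"
    and "finite I" "finite S" and range: "\<And>i s. i \<in> insert n I \<Longrightarrow> s \<in> space M \<Longrightarrow> w i s \<in> S"
  shows integrable_mult_indep: "integrable M (\<lambda>s. \<phi> (w n s) * G (restrict (\<lambda>i. w i s) I))"
    and expectation_mult_indep: "expectation (\<lambda>s. \<phi> (w n s) * G (restrict (\<lambda>i. w i s) I))
      = expectation (\<lambda>s. \<phi> (w n s)) * expectation (\<lambda>s. G (restrict (\<lambda>i. w i s) I))"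
proof -
  define p where "p i a = prob {s \<in> space M. w i s = a}" for i a
  define H where "H c = \<phi> (c n) * G (restrict c I)" for c :: "'i \<Rightarrow> real"
  have H: "\<phi> (w n s) * G (restrict (\<lambda>i. w i s) I) = H (restrict (\<lambda>i. w i s) (insert n I))" for s
    using \<open>n \<notin> I\<close> by (simp add: H_def Int_insert_left)
  have "finite (insert n I)" "I \<subseteq> J" and range_I: "\<And>i s. i \<in> I \<Longrightarrow> s \<in> space M \<Longrightarrow> w i s \<in> S"
    using \<open>finite I\<close> \<open>insert n I \<subseteq> J\<close> range by auto
  note expectation_insert = expectation_restrict_finite_range[OF indep \<open>insert n I \<subseteq> J\<close>
      \<open>finite (insert n I)\<close> \<open>finite S\<close> range]
  note expectation_I =
    expectation_restrict_finite_range[OF indep \<open>I \<subseteq> J\<close> \<open>finite I\<close> \<open>finite S\<close> range_I]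
  show "integrable M (\<lambda>s. \<phi> (w n s) * G (restrict (\<lambda>i. w i s) I))"
    unfolding H using indep \<open>insert n I \<subseteq> J\<close> \<open>finite (insert n I)\<close> \<open>finite S\<close> range
    by (rule integrable_restrict_finite_range)
  have "w n \<in> borel_measurable M"
    using indep \<open>insert n I \<subseteq> J\<close> by (auto simp: indep_vars_def)
  then have single: "expectation (\<lambda>s. \<phi> (w n s)) = (\<Sum>a\<in>S. \<phi> a * p n a)"
    unfolding p_def using range \<open>finite S\<close> by (intro expectation_finite_range) auto
  have "expectation (\<lambda>s. \<phi> (w n s) * G (restrict (\<lambda>i. w i s) I))
      = (\<Sum>c\<in>PiE (insert n I) (\<lambda>_. S). H c * (\<Prod>i\<in>insert n I. p i (c i)))"
    unfolding H p_def by (rule expectation_insert)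
  also have "\<dots> = (\<Sum>a\<in>S. \<Sum>c\<in>PiE I (\<lambda>_. S). (\<phi> a * p n a) * (G c * (\<Prod>i\<in>I. p i (c i))))"
    unfolding sum_PiE_insert[OF \<open>n \<notin> I\<close>]
  proof (intro sum.cong refl)
    fix a c assume "c \<in> PiE I (\<lambda>_. S)"
    then have "restrict (c(n := a)) I = c"
      using \<open>n \<notin> I\<close> by (auto simp: fun_eq_iff PiE_def extensional_def)
    moreover have "(\<Prod>i\<in>I. p i ((c(n := a)) i)) = (\<Prod>i\<in>I. p i (c i))"
      using \<open>n \<notin> I\<close> by (intro prod.cong) auto
    ultimately show "H (c(n := a)) * (\<Prod>i\<in>insert n I. p i ((c(n := a)) i))
        = (\<phi> a * p n a) * (G c * (\<Prod>i\<in>I. p i (c i)))"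
      using \<open>n \<notin> I\<close> \<open>finite I\<close> by (simp add: H_def)
  qed
  also have "\<dots> = (\<Sum>a\<in>S. \<phi> a * p n a) * (\<Sum>c\<in>PiE I (\<lambda>_. S). G c * (\<Prod>i\<in>I. p i (c i)))"
    by (simp add: sum_product)
  also have "\<dots> = expectation (\<lambda>s. \<phi> (w n s)) * expectation (\<lambda>s. G (restrict (\<lambda>i. w i s) I))"
    using single expectation_I[where F = G] by (simp add: p_def)
  finally show "expectation (\<lambda>s. \<phi> (w n s) * G (restrict (\<lambda>i. w i s) I))
      = expectation (\<lambda>s. \<phi> (w n s)) * expectation (\<lambda>s. G (restrict (\<lambda>i. w i s) I))" .
qed

lemma expectation_hhat_mult_Delta:
  fixes w :: "'i \<Rightarrow> 'a \<Rightarrow> real" and A B F :: "('i \<Rightarrow> real) \<Rightarrow> real"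
  assumes indep: "indep_vars (\<lambda>_. borel) w J" and "insert n I \<subseteq> J" "n \<notin> I" "finite I"
    and range: "\<And>i s. s \<in> space M \<Longrightarrow> w i s = - omega \<or> w i s = omega"
    and sym: "prob {s \<in> space M. w n s = omega} = prob {s \<in> space M. w n s = - omega}"
    and odd: "\<And>v. h (- v) = - h v" "\<And>v. g (- v) = - g v" and "eps > 0"
  defines "H s \<equiv> restrict (\<lambda>i. w i s) I"
  shows "expectation (\<lambda>s. F (H s)
            * (hhat h eps (B (H s)) (w n s) * Delta rho eps g xstar (A (H s)) (B (H s)) (w n s)))
       = expectation (\<lambda>s. h (w n s) * g (w n s))
         * expectation (\<lambda>s. F (H s) * (A (H s) - xstar - rho * B (H s)))"
proof -
  define G1 where "G1 c = F c * (A c - xstar - rho * B c)" for c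
  define G2 where
    "G2 c = F c * ((rho^2 / 2 * (B c)^2 - rho * (A c - xstar) * B c) / (\<bar>B c\<bar> + eps))" for c
  define G3 where "G3 c = F c * ((\<bar>B c\<bar> + eps) / 2)" for c
  have integrand: "F (H s)
        * (hhat h eps (B (H s)) (w n s) * Delta rho eps g xstar (A (H s)) (B (H s)) (w n s))
      = h (w n s) * g (w n s) * G1 (H s) + h (w n s) * G2 (H s)
        + h (w n s) * (g (w n s))^2 * G3 (H s)" for s
    unfolding hhat_mult_Delta[OF \<open>eps > 0\<close>] G1_def G2_def G3_def by (simp add: algebra_simps)
  have "finite {- omega, omega}"
    and "\<And>i s. i \<in> insert n I \<Longrightarrow> s \<in> space M \<Longrightarrow> w i s \<in> {- omega, omega}"
    using range by auto
  note integrable = integrable_mult_indep[OF indep \<open>insert n I \<subseteq> J\<close> \<open>n \<notin> I\<close> \<open>finite I\<close> this]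
    and factor = expectation_mult_indep[OF indep \<open>insert n I \<subseteq> J\<close> \<open>n \<notin> I\<close> \<open>finite I\<close> this]
  have "w n \<in> borel_measurable M"
    using indep \<open>insert n I \<subseteq> J\<close> by (auto simp: indep_vars_def)
  note odd_zero = expectation_odd_symmetric[OF this range sym]
  have "expectation (\<lambda>s. h (w n s)) = 0" "expectation (\<lambda>s. h (w n s) * (g (w n s))^2) = 0"
    using odd by (auto intro!: odd_zero)
  then show ?thesis
    unfolding integrand
    using integrable[of "\<lambda>v. h v * g v" G1] integrable[of h G2]
      integrable[of "\<lambda>v. h v * (g v)^2" G3]
      factor[of "\<lambda>v. h v * g v" G1] factor[of h G2] factor[of "\<lambda>v. h v * (g v)^2" G3]
    by (simp add: H_def G1_def)
qed

end

theorem lemma3: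
  fixes M :: "'a measure" and w :: "nat \<Rightarrow> 'a \<Rightarrow> real"
    and h g :: "real \<Rightarrow> real" and fbar :: "real \<Rightarrow> real \<Rightarrow> real \<Rightarrow> real"
    and rho beta eps omega mu xstar Jstar x0 y0 y1 :: real and k :: nat
  assumes "prob_space M"
    and "rho > 0" and "0 < beta" and "beta < 2" and "eps > 0" and "omega > 0" and "mu > 0"
    and "prob_space.indep_vars M (\<lambda>_. borel) w UNIV"
    and "\<And>i s. s \<in> space M \<Longrightarrow> w i s = - omega \<or> w i s = omega"
    and "\<And>i. measure M {s \<in> space M. w i s = omega} = 1 / 2"
    and "\<And>i. measure M {s \<in> space M. w i s = - omega} = 1 / 2"
    and "\<And>v. h (- v) = - h v" and "\<And>v. g (- v) = - g v"
    and "\<And>v. sgn (g v) = sgn (h v)"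
    and "\<And>v. h v = 0 \<longleftrightarrow> v = 0" and "\<And>v. g v = 0 \<longleftrightarrow> v = 0"
    and "k \<ge> 1"
  shows
   "(let J = Jobj Jstar mu xstar;
         X = (\<lambda>n s. fst (traj rho beta eps mu J h g x0 y0 y1 (\<lambda>i. w i s) n));
         Y = (\<lambda>n s. snd (traj rho beta eps mu J h g x0 y0 y1 (\<lambda>i. w i s) n));
         \<gamma> = prob_space.expectation M (\<lambda>s. h (w (k - 1) s) * g (w (k - 1) s))
     in prob_space.expectation M
          (\<lambda>s. mu * h (w (k - 1) s) * fbar (X (k - 1) s) (Y (k - 1) s) (Y k s)
                 / (\<bar>Y (k - 1) s\<bar> + eps)
               * Delta rho eps g xstar (X (k - 1) s) (Y (k - 1) s) (w (k - 1) s))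
        = mu * \<gamma> * prob_space.expectation M
          (\<lambda>s. fbar (X (k - 1) s) (Y (k - 1) s) (Y k s) * (X (k - 1) s - xstar - rho * Y (k - 1) s)))"
proof -
  interpret prob_space M by fact
  obtain n where k: "k = Suc n"
    using \<open>k \<ge> 1\<close> by (cases k) auto
  define T where "T = traj rho beta eps mu (Jobj Jstar mu xstar) h g x0 y0 y1"
  define H where "H s = restrict (\<lambda>i. w i s) {..<n}" for s
  define F where "F c = fbar (fst (T c n)) (snd (T c n)) (snd (T c (Suc n)))" for c
  have history: "T (\<lambda>i. w i s) n = T (H s) n"
    "snd (T (\<lambda>i. w i s) (Suc n)) = snd (T (H s) (Suc n))" for s
    unfolding T_def H_def by (auto intro!: traj_cong snd_traj_Suc_cong)
  have sym: "prob {s \<in> space M. w n s = omega} = prob {s \<in> space M. w n s = - omega}"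
    using assms(10,11)[of n] by simp
  have "expectation (\<lambda>s. F (H s) * (hhat h eps (snd (T (H s) n)) (w n s)
            * Delta rho eps g xstar (fst (T (H s) n)) (snd (T (H s) n)) (w n s)))
      = expectation (\<lambda>s. h (w n s) * g (w n s))
        * expectation (\<lambda>s. F (H s) * (fst (T (H s) n) - xstar - rho * snd (T (H s) n)))"
    unfolding H_def
    by (rule expectation_hhat_mult_Delta[where J = UNIV]) (use assms sym in auto)
  moreover have "mu * h (w n s) * F (H s) / (\<bar>snd (T (H s) n)\<bar> + eps)
        * Delta rho eps g xstar (fst (T (H s) n)) (snd (T (H s) n)) (w n s)
      = mu * (F (H s) * (hhat h eps (snd (T (H s) n)) (w n s)
        * Delta rho eps g xstar (fst (T (H s) n)) (snd (T (H s) n)) (w n s)))" for s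
    by (simp add: hhat_def)
  ultimately show ?thesis
    unfolding Let_def k diff_Suc_1 T_def[symmetric] history F_def[symmetric]
    by (simp add: mult.assoc)
qed

end
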